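(* Let $\delta\in(0,\tfrac12)$ and $M>0$. There exists $n_0=n_0(\delta,M)$ such that for all $n>n_0$ and all integers $t$ with $n^{0.99}<t<n-n^{1/2+2\delta}$, writing $u=n-t$, the following assertions $(A_i)$ and $(B_i)$ hold for every nonnegative integer $i$ with $(1-\delta)^iu>n^{1/2+2\delta}$: $(A_i)$ For every $t$-intersecting family $\mathcal F\subseteq\Sigma_n$ there exists a family $\mathcal S$ of partial permutations such that (i) each element of $\mathcal S$ has size at most $t+(1-\delta)^iu$; (ii) $|\mathcal F\setminus\mathcal F[\mathcal S]|<\frac{2^i}{n^M}\cdot u!$; (iii) $\mathcal S$ is $(t-n^{1/2})$-intersecting. $(B_i)$ For every $t$-intersecting family $\mathcal F\subseteq\Sigma_n$ with $|\mathcal F|\ge\frac{2^{i+1}}{n^M}\cdot u!$ there exists $X\subseteq[n]^2$ with $|X|=t-n^{1/2}$ and $$|\mathcal F(X)|\ge \left(10n^{1/2-\delta}\right)^{-(1-\delta)^{i+1}u}|\mathcal F|.$$ (Non-integer quantities such as $n^{1/2}$ and $(1-\delta)^iu$ are to be rounded to integers; rounding is immaterial.)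
   Context: Each permutation $\sigma$ of $[n]=\{1,\dots,n\}$ is identified with the set $\{(1,\sigma(1)),\dots,(n,\sigma(n))\}\subseteq[n]^2$, and $\Sigma_n$ denotes the collection of these $n$-element sets. A partial permutation is a subset of some element of $\Sigma_n$. A family of sets is $s$-intersecting if any two members $A,B$ satisfy $|A\cap B|\ge s$. For a family $\mathcal F$ and a set $X$: $\mathcal F[X]=\{F\in\mathcal F:X\subseteq F\}$, $\mathcal F(X)=\{F\setminus X: F\in\mathcal F[X]\}$, and for a family $\mathcal S$, $\mathcal F[\mathcal S]=\bigcup_{A\in\mathcal S}\mathcal F[A]$. *)

theory Defs
  imports Complex_Main
begin

type_synonym cell = "nat \<times> nat"

definition perm_graph :: "nat \<Rightarrow> (nat \<Rightarrow> nat) \<Rightarrow> cell set" where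
  "perm_graph n \<sigma> = (\<lambda>k. (k, \<sigma> k)) ` {1..n}"

definition Sigma_n :: "nat \<Rightarrow> cell set set" where
  "Sigma_n n = {perm_graph n \<sigma> | \<sigma>. bij_betw \<sigma> {1..n} {1..n}}"

definition partial_perm :: "nat \<Rightarrow> cell set \<Rightarrow> bool" where
  "partial_perm n A \<longleftrightarrow> (\<exists>P \<in> Sigma_n n. A \<subseteq> P)"

definition s_intersecting :: "nat \<Rightarrow> 'a set set \<Rightarrow> bool" where
  "s_intersecting s \<F> \<longleftrightarrow> (\<forall>A\<in>\<F>. \<forall>B\<in>\<F>. s \<le> card (A \<inter> B))"

definition fam_contain :: "'a set set \<Rightarrow> 'a set \<Rightarrow> 'a set set" where
  "fam_contain \<F> X = {F \<in> \<F>. X \<subseteq> F}"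

definition fam_link :: "'a set set \<Rightarrow> 'a set \<Rightarrow> 'a set set" where
  "fam_link \<F> X = (\<lambda>F. F - X) ` fam_contain \<F> X"

definition fam_contain_any :: "'a set set \<Rightarrow> 'a set set \<Rightarrow> 'a set set" where
  "fam_contain_any \<F> \<S> = (\<Union>A\<in>\<S>. fam_contain \<F> A)"

end

theory Submission
  imports Defs "HOL-Library.FuncSet" "HOL-Real_Asymp.Real_Asymp"
begin

text \<open>Induction on \<open>i\<close> along \<open>(A\<^sub>i) \<Longrightarrow> (B\<^sub>i) \<Longrightarrow> (A\<^sub>i\<^sub>+\<^sub>1)\<close>, writing \<open>k = (1-\<delta>)\<^sup>i u\<close>,
  \<open>s = t - \<surd>n\<close> and \<open>\<rho> = 10 n\<^bsup>1/2-\<delta>\<^esup>\<close>.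

  \<open>(A\<^sub>i) \<Longrightarrow> (B\<^sub>i)\<close>: more than half of \<open>\<F>\<close> lies in \<open>\<F>[\<S>]\<close>. Fix \<open>A \<in> \<S>\<close>; every member of \<open>\<F>[\<S>]\<close>
  contains an \<open>s\<close>-subset of \<open>A\<close>, and there are at most \<open>\<rho>\<^bsup>(1-\<delta>)k\<^esup>/2\<close> of those, so one of
  them lies in at least \<open>|\<F>| / \<rho>\<^bsup>(1-\<delta>)k\<^esup>\<close> members.

  \<open>(B\<^sub>i) \<Longrightarrow> (A\<^sub>i\<^sub>+\<^sub>1)\<close>: while at least \<open>2\<^sup>i\<^sup>+\<^sup>1 u!/n\<^sup>M\<close> members \<open>\<G>\<close> remain, remove \<open>\<G>[Y]\<close>
  for a set \<open>Y\<close> maximising \<open>|\<G>[Y]| r\<^bsup>|Y|\<^esup>\<close>. Such \<open>Y\<close> is \<open>r\<close>-spread (one more cell divides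
  \<open>|\<G>[Y]|\<close> by at least \<open>r\<close>); comparing its weight with
  that of the dense \<open>s\<close>-set given by \<open>(B\<^sub>i)\<close> and using \<open>|\<G>[Y]| \<le> (n - |Y|)!\<close> bounds \<open>|Y|\<close> by
  \<open>t + (1-\<delta>)k\<close>. Finally, two \<open>r\<close>-spread sets of one \<open>t\<close>-intersecting family share at least \<open>s\<close>
  cells by double counting, since \<open>r = u / (e \<rho> n\<^bsup>\<delta>/2\<^esup>) \<ge> n\<^bsup>\<delta>/2\<^esup> / 10e\<close> is large.\<close>

lemma Sigma_nE:
  assumes "P \<in> Sigma_n n"
  obtains \<sigma> where "bij_betw \<sigma> {1..n} {1..n}" "P = perm_graph n \<sigma>"
  using assms unfolding Sigma_n_def by blast

lemma Sigma_n_subset_grid: "P \<in> Sigma_n n \<Longrightarrow> P \<subseteq> {1..n} \<times> {1..n}"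
  by (elim Sigma_nE) (auto simp: perm_graph_def bij_betw_def)

lemma finite_Sigma_n_elem: "P \<in> Sigma_n n \<Longrightarrow> finite P"
  using Sigma_n_subset_grid finite_subset by blast

lemma card_Sigma_n_elem: "P \<in> Sigma_n n \<Longrightarrow> card P = n"
  by (elim Sigma_nE) (simp add: perm_graph_def card_image inj_on_def)

lemma finite_Sigma_n: "finite (Sigma_n n)"
proof -
  have "Sigma_n n \<subseteq> Pow ({1..n} \<times> {1..n})" using Sigma_n_subset_grid by blast
  then show ?thesis by (rule finite_subset) simp
qed

lemma finite_subset_Sigma_n: "\<F> \<subseteq> Sigma_n n \<Longrightarrow> finite \<F>"
  using finite_Sigma_n finite_subset by blast

lemma finite_if_fam_contain_ne:
  assumes "\<H> \<subseteq> Sigma_n n" "fam_contain \<H> Y \<noteq> {}"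
  shows "finite Y"
proof -
  obtain P where "P \<in> Sigma_n n" "Y \<subseteq> P" using assms by (auto simp: fam_contain_def)
  then show ?thesis using finite_Sigma_n_elem finite_subset by blast
qed

lemma subset_perm_graph_eq_image:
  "Y \<subseteq> perm_graph n \<sigma> \<Longrightarrow> Y = (\<lambda>k. (k, \<sigma> k)) ` fst ` Y"
  by (force simp: perm_graph_def)

text \<open>A permutation through \<open>Y\<close> is determined by its restriction to the rows \<open>I\<close> missed by \<open>Y\<close>,
  which is an injection from \<open>I\<close> into the columns \<open>J\<close> missed by \<open>Y\<close>.\<close>
lemma fam_contain_Sigma_n_subset_image:
  fixes n :: nat and Y :: "cell set"
  defines "I \<equiv> {1..n} - fst ` Y" and "J \<equiv> {1..n} - snd ` Y"
  shows "fam_contain (Sigma_n n) Y \<subseteq> (\<lambda>f. Y \<union> (\<lambda>k. (k, f k)) ` I) ` {f \<in> I \<rightarrow>\<^sub>E J. inj_on f I}"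
proof
  fix P assume "P \<in> fam_contain (Sigma_n n) Y"
  then obtain \<sigma> where \<sigma>: "bij_betw \<sigma> {1..n} {1..n}" "P = perm_graph n \<sigma>" "Y \<subseteq> P"
    by (auto simp: fam_contain_def elim: Sigma_nE)
  have inj: "inj_on \<sigma> {1..n}" using \<sigma>(1) by (simp add: bij_betw_def)
  have D: "fst ` Y \<subseteq> {1..n}" using \<sigma>(2,3) by (auto simp: perm_graph_def)
  have Y_eq: "Y = (\<lambda>k. (k, \<sigma> k)) ` fst ` Y"
    using \<sigma>(2,3) by (metis subset_perm_graph_eq_image)
  have I_sub: "I \<subseteq> {1..n}" by (auto simp: I_def)
  have "\<sigma> k \<in> J" if "k \<in> I" for k
  proof -
    have "snd ` Y = \<sigma> ` fst ` Y" by (subst (1) Y_eq) (simp add: image_image)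
    moreover have "\<sigma> k \<notin> \<sigma> ` fst ` Y" using that D inj by (simp add: I_def inj_on_image_mem_iff)
    moreover have "\<sigma> k \<in> {1..n}" using that I_sub bij_betwE[OF \<sigma>(1)] by blast
    ultimately show ?thesis by (simp add: J_def)
  qed
  moreover have "inj_on (restrict \<sigma> I) I"
    using inj_on_subset[OF inj I_sub] by (simp add: inj_on_def)
  ultimately have restrict_mem: "restrict \<sigma> I \<in> {f \<in> I \<rightarrow>\<^sub>E J. inj_on f I}" by simp
  have P_eq: "P = Y \<union> (\<lambda>k. (k, restrict \<sigma> I k)) ` I"
  proof -
    have "{1..n} = fst ` Y \<union> I" using D by (auto simp: I_def)
    then have "P = (\<lambda>k. (k, \<sigma> k)) ` fst ` Y \<union> (\<lambda>k. (k, \<sigma> k)) ` I"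
      by (simp add: \<sigma>(2) perm_graph_def image_Un)
    then have "P = Y \<union> (\<lambda>k. (k, \<sigma> k)) ` I" by (simp only: Y_eq[symmetric])
    then show ?thesis by simp
  qed
  show "P \<in> (\<lambda>f. Y \<union> (\<lambda>k. (k, f k)) ` I) ` {f \<in> I \<rightarrow>\<^sub>E J. inj_on f I}"
    by (rule image_eqI[OF _ restrict_mem]) (rule P_eq)
qed

lemma card_fam_contain_Sigma_n: "card (fam_contain (Sigma_n n) Y) \<le> fact (n - card Y)"
proof (cases "fam_contain (Sigma_n n) Y = {}")
  case False
  define I where "I = {1..n} - fst ` Y"
  define J where "J = {1..n} - snd ` Y"
  obtain P where "P \<in> Sigma_n n" "Y \<subseteq> P" using False by (auto simp: fam_contain_def)
  then obtain \<sigma> where \<sigma>: "bij_betw \<sigma> {1..n} {1..n}" "Y \<subseteq> perm_graph n \<sigma>"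
    by (auto elim: Sigma_nE)
  have D: "fst ` Y \<subseteq> {1..n}" and R: "snd ` Y \<subseteq> {1..n}"
    using \<open>P \<in> Sigma_n n\<close> \<open>Y \<subseteq> P\<close> Sigma_n_subset_grid by fastforce+
  have Y_eq: "Y = (\<lambda>k. (k, \<sigma> k)) ` fst ` Y" by (rule subset_perm_graph_eq_image[OF \<sigma>(2)])
  have card_D: "card (fst ` Y) = card Y"
    by (subst (2) Y_eq) (rule card_image[symmetric], simp add: inj_on_def)
  have "snd ` Y = \<sigma> ` fst ` Y" by (subst (1) Y_eq) (simp add: image_image)
  then have card_R: "card (snd ` Y) = card Y"
    using D \<sigma>(1) card_D by (metis bij_betw_def card_image inj_on_subset)
  have card_I: "card I = n - card Y"
    using card_Diff_subset[OF finite_subset[OF D] D] card_D by (simp add: I_def)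
  have card_J: "card J = n - card Y"
    using card_Diff_subset[OF finite_subset[OF R] R] card_R by (simp add: J_def)
  define Inj where "Inj = {f \<in> I \<rightarrow>\<^sub>E J. inj_on f I}"
  have "card Inj = card J ^ (card I - card I) * prod ((-) (card J)) {0..<card I}"
    unfolding Inj_def by (rule card_inj_on_subset_funcset) (auto simp: I_def J_def)
  then have card_Inj: "card Inj = fact (n - card Y)"
    by (simp add: card_I card_J fact_prod_rev)
  have "card (fam_contain (Sigma_n n) Y) \<le> card ((\<lambda>f. Y \<union> (\<lambda>k. (k, f k)) ` I) ` Inj)"
    using fam_contain_Sigma_n_subset_image[of n Y]
    by (intro card_mono) (simp_all add: Inj_def I_def J_def finite_PiE)
  also have "\<dots> \<le> card Inj" by (rule card_image_le) (simp add: Inj_def I_def J_def finite_PiE)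
  finally show ?thesis by (simp add: card_Inj)
qed simp

lemma card_fam_contain_le:
  assumes "\<F> \<subseteq> Sigma_n n"
  shows "card (fam_contain \<F> Y) \<le> fact (n - card Y)"
proof -
  have "card (fam_contain \<F> Y) \<le> card (fam_contain (Sigma_n n) Y)"
    using assms by (intro card_mono) (auto simp: fam_contain_def finite_Sigma_n)
  then show ?thesis using card_fam_contain_Sigma_n[of n Y] by linarith
qed

lemma card_fam_link: "card (fam_link \<F> X) = card (fam_contain \<F> X)"
  unfolding fam_link_def
  by (rule card_image) (auto simp: inj_on_def fam_contain_def dest: Diff_partition)

lemma pow_div_fact_le_exp:
  fixes x :: real
  assumes "0 \<le> x"
  shows "x ^ n / fact n \<le> exp x"
proof -
  let ?f = "\<lambda>k. x ^ k /\<^sub>R fact k"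
  have sums: "?f sums exp x" by (rule exp_converges)
  have "x ^ n / fact n = sum ?f {n}" by (simp add: divide_inverse mult.commute)
  also have "\<dots> \<le> suminf ?f" using sums assms by (intro sum_le_suminf) (auto simp: sums_iff)
  also have "\<dots> = exp x" using sums by (simp add: sums_iff)
  finally show ?thesis .
qed

lemma pow_div_exp_le_fact: "(real m / exp 1) ^ m \<le> fact m"
proof -
  have "real m ^ m / fact m \<le> exp (real m)" by (rule pow_div_fact_le_exp) simp
  also have "exp (real m) = exp 1 ^ m" by (simp add: exp_of_nat_mult[symmetric])
  finally have "real m ^ m \<le> exp 1 ^ m * fact m" by (simp add: divide_le_eq)
  then show ?thesis by (simp add: power_divide divide_le_eq mult.commute)
qed

lemma fact_diff_mult_le_fact:
  assumes "m \<le> u"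
  shows "fact (u - m) * (real u / exp 1) ^ m \<le> fact u"
proof (cases "m = 0")
  case False
  have "(real u / exp 1) ^ m = (real u / real m) ^ m * (real m / exp 1) ^ m"
    using False by (simp add: power_mult_distrib[symmetric])
  also have "\<dots> \<le> real (u choose m) * fact m"
    using binomial_ge_n_over_k_pow_k[OF assms] by (intro mult_mono pow_div_exp_le_fact) auto
  finally have "fact (u - m) * (real u / exp 1) ^ m \<le> fact (u - m) * (real (u choose m) * fact m)"
    by (intro mult_left_mono) auto
  also have "\<dots> = fact u"
  proof -
    have "fact u = fact m * fact (u - m) * real (u choose m)"
      using binomial_fact_lemma[OF assms] by (metis of_nat_fact of_nat_mult)
    then show ?thesis by simp
  qed
  finally show ?thesis .
qed simp

lemma binomial_le_pow_div_fact: "real (m choose d) \<le> real m ^ d / fact d"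
proof (cases "d \<le> m")
  case True
  have "(m choose d) * fact d = fact m div fact (m - d)"
    using binomial_fact_lemma[OF True]
    by (metis fact_nonzero mult.commute nonzero_mult_div_cancel_left mult.assoc)
  also have "\<dots> \<le> m ^ d" by (rule fact_div_fact_le_pow[OF True])
  finally have "real ((m choose d) * fact d) \<le> real (m ^ d)" by linarith
  then show ?thesis by (simp add: field_simps)
qed (simp add: binomial_eq_0)

lemma s_intersecting_subset: "s_intersecting t \<F> \<Longrightarrow> \<G> \<subseteq> \<F> \<Longrightarrow> s_intersecting t \<G>"
  unfolding s_intersecting_def by blast

lemma sum_card_filter_swap:
  assumes "finite A" "finite B"
  shows "(\<Sum>a\<in>A. card {b\<in>B. R a b}) = (\<Sum>b\<in>B. card {a\<in>A. R a b})"
proof -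
  have "(\<Sum>a\<in>A. card {b\<in>B. R a b}) = (\<Sum>a\<in>A. \<Sum>b\<in>B. if R a b then 1 else 0)"
    using assms by (simp add: sum.inter_filter[symmetric])
  also have "\<dots> = (\<Sum>b\<in>B. \<Sum>a\<in>A. if R a b then 1 else 0)" by (rule sum.swap)
  also have "\<dots> = (\<Sum>b\<in>B. card {a\<in>A. R a b})"
    using assms by (simp add: sum.inter_filter[symmetric])
  finally show ?thesis .
qed

lemma le_average_bound:
  fixes f :: "'a \<Rightarrow> real"
  assumes "finite A" "A \<noteq> {}" "\<And>x. x \<in> A \<Longrightarrow> t \<le> f x" "(\<Sum>x\<in>A. f x) \<le> real (card A) * c"
  shows "t \<le> c"
proof -
  have "real (card A) * t \<le> (\<Sum>x\<in>A. f x)" using sum_mono[of A "\<lambda>_. t" f] assms(3) by simp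
  then have "real (card A) * t \<le> real (card A) * c" using assms(4) by linarith
  then show ?thesis using assms(1,2) by (simp add: card_gt_0_iff)
qed

lemma exists_subset_in_many:
  assumes "finite \<X>" "finite \<G>" "\<And>P. P \<in> \<G> \<Longrightarrow> \<exists>X\<in>\<X>. X \<subseteq> P" "\<G> \<noteq> {}"
  shows "\<exists>X\<in>\<X>. card \<G> \<le> card \<X> * card {P\<in>\<G>. X \<subseteq> P}"
proof -
  have "\<X> \<noteq> {}" using assms(3,4) by blast
  define m where "m = Max ((\<lambda>X. card {P\<in>\<G>. X \<subseteq> P}) ` \<X>)"
  have "m \<in> (\<lambda>X. card {P\<in>\<G>. X \<subseteq> P}) ` \<X>"
    unfolding m_def using \<open>\<X> \<noteq> {}\<close> assms(1) by (intro Max_in) auto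
  then obtain X where X: "X \<in> \<X>" "m = card {P\<in>\<G>. X \<subseteq> P}" by blast
  have "card \<G> = (\<Sum>P\<in>\<G>. 1)" by simp
  also have "\<dots> \<le> (\<Sum>P\<in>\<G>. card {X\<in>\<X>. X \<subseteq> P})"
  proof (rule sum_mono)
    fix P assume "P \<in> \<G>"
    then have "{X\<in>\<X>. X \<subseteq> P} \<noteq> {}" using assms(3) by blast
    then show "1 \<le> card {X\<in>\<X>. X \<subseteq> P}" using assms(1) by (simp add: Suc_le_eq card_gt_0_iff)
  qed
  also have "\<dots> = (\<Sum>X\<in>\<X>. card {P\<in>\<G>. X \<subseteq> P})"
    by (rule sum_card_filter_swap[OF assms(2,1)])
  also have "\<dots> \<le> card \<X> * m"
  proof -
    have "card {P\<in>\<G>. X' \<subseteq> P} \<le> m" if "X' \<in> \<X>" for X'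
      unfolding m_def using assms(1) that by (intro Max_ge) auto
    then show ?thesis using sum_bounded_above[of \<X> "\<lambda>X. card {P\<in>\<G>. X \<subseteq> P}" m] by simp
  qed
  finally show ?thesis using X by blast
qed

definition spread :: "real \<Rightarrow> 'a set set \<Rightarrow> 'a set \<Rightarrow> bool" where
  "spread r \<H> Y \<longleftrightarrow> (\<forall>z. z \<notin> Y \<longrightarrow>
      real (card (fam_contain \<H> (insert z Y))) * r \<le> real (card (fam_contain \<H> Y)))"

lemma sum_card_inter_le_if_spread:
  assumes "spread r \<H> Y" "0 < r" "finite (fam_contain \<H> Y)" "finite W" "W \<inter> Y = {}"
  shows "(\<Sum>P\<in>fam_contain \<H> Y. real (card (W \<inter> P)))
           \<le> real (card W) * real (card (fam_contain \<H> Y)) / r"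
proof -
  have "(\<Sum>P\<in>fam_contain \<H> Y. card (W \<inter> P)) = (\<Sum>P\<in>fam_contain \<H> Y. card {z\<in>W. z \<in> P})"
    by (intro sum.cong) (auto intro: arg_cong[where f = card])
  also have "\<dots> = (\<Sum>z\<in>W. card {P\<in>fam_contain \<H> Y. z \<in> P})"
    by (rule sum_card_filter_swap[OF assms(3,4)])
  also have "\<dots> = (\<Sum>z\<in>W. card (fam_contain \<H> (insert z Y)))"
    by (intro sum.cong arg_cong[where f = card]) (auto simp: fam_contain_def)
  finally have "(\<Sum>P\<in>fam_contain \<H> Y. real (card (W \<inter> P)))
                  = (\<Sum>z\<in>W. real (card (fam_contain \<H> (insert z Y))))"
    by (metis of_nat_sum)
  also have "\<dots> \<le> (\<Sum>z\<in>W. real (card (fam_contain \<H> Y)) / r)"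
    using assms(1,2,5) by (intro sum_mono) (auto simp: spread_def le_divide_eq)
  finally show ?thesis by simp
qed

text \<open>Members \<open>P\<^sub>1 \<supseteq> Y\<^sub>1\<close> and \<open>P\<^sub>2 \<supseteq> Y\<^sub>2\<close> of a \<open>t\<close>-intersecting family meet inside
  \<open>(Y\<^sub>1 \<inter> Y\<^sub>2) \<union> ((Y\<^sub>1 - Y\<^sub>2) \<inter> P\<^sub>2) \<union> ((P\<^sub>2 - Y\<^sub>1) \<inter> P\<^sub>1)\<close>, and by spreadness the last part is
  small on average over \<open>P\<^sub>1\<close>.\<close>
lemma spread_intersection_bound_member:
  assumes \<F>: "\<F> \<subseteq> Sigma_n n" "s_intersecting t \<F>"
    and \<H>: "\<H> \<subseteq> \<F>" "fam_contain \<H> Y\<^sub>1 \<noteq> {}" "spread r \<H> Y\<^sub>1" "0 < r"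
    and P\<^sub>2: "P\<^sub>2 \<in> \<F>" "Y\<^sub>2 \<subseteq> P\<^sub>2"
  shows "real t \<le> real (card (Y\<^sub>1 \<inter> Y\<^sub>2)) + real (card ((Y\<^sub>1 - Y\<^sub>2) \<inter> P\<^sub>2))
                    + (real n - real (card (Y\<^sub>1 \<inter> Y\<^sub>2))) / r"
proof -
  define A where "A = fam_contain \<H> Y\<^sub>1"
  define a where "a = card (Y\<^sub>1 \<inter> Y\<^sub>2)"
  let ?x = "real a + real (card ((Y\<^sub>1 - Y\<^sub>2) \<inter> P\<^sub>2))"
  have "A \<subseteq> \<F>" using \<H>(1) by (auto simp: A_def fam_contain_def)
  then have A: "A \<subseteq> \<F>" "A \<noteq> {}" "finite A"
    using \<H>(2) finite_subset_Sigma_n[OF order_trans[OF _ \<F>(1)]] by (auto simp: A_def)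
  have P\<^sub>2_perm: "P\<^sub>2 \<in> Sigma_n n" using P\<^sub>2(1) \<F>(1) by blast
  have "finite Y\<^sub>1" using \<H>(1,2) \<F>(1) by (intro finite_if_fam_contain_ne) auto
  show ?thesis
    unfolding a_def[symmetric]
  proof (rule le_average_bound[OF A(3,2)])
    show "real t \<le> ?x + real (card ((P\<^sub>2 - Y\<^sub>1) \<inter> P\<^sub>1))" if P\<^sub>1: "P\<^sub>1 \<in> A" for P\<^sub>1
    proof -
      have "t \<le> card (P\<^sub>1 \<inter> P\<^sub>2)" using \<F>(2) A(1) P\<^sub>1 P\<^sub>2(1) unfolding s_intersecting_def by blast
      also have "\<dots> \<le> card ((Y\<^sub>1 \<inter> Y\<^sub>2) \<union> ((Y\<^sub>1 - Y\<^sub>2) \<inter> P\<^sub>2) \<union> ((P\<^sub>2 - Y\<^sub>1) \<inter> P\<^sub>1))"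
        using \<open>finite Y\<^sub>1\<close> finite_Sigma_n_elem[OF P\<^sub>2_perm] P\<^sub>1
        by (intro card_mono) (auto simp: A_def fam_contain_def)
      also have "\<dots> \<le> a + card ((Y\<^sub>1 - Y\<^sub>2) \<inter> P\<^sub>2) + card ((P\<^sub>2 - Y\<^sub>1) \<inter> P\<^sub>1)"
        unfolding a_def by (meson add_le_mono card_Un_le le_refl order_trans)
      finally show ?thesis by linarith
    qed
    have "real (card (P\<^sub>2 - Y\<^sub>1)) \<le> real n - real a"
    proof -
      have "a \<le> card (P\<^sub>2 \<inter> Y\<^sub>1)"
        unfolding a_def using P\<^sub>2(2) finite_Sigma_n_elem[OF P\<^sub>2_perm] by (intro card_mono) auto
      moreover have "card P\<^sub>2 = card (P\<^sub>2 \<inter> Y\<^sub>1) + card (P\<^sub>2 - Y\<^sub>1)"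
        using finite_Sigma_n_elem[OF P\<^sub>2_perm] by (rule card_Int_Diff)
      ultimately show ?thesis using card_Sigma_n_elem[OF P\<^sub>2_perm] by auto
    qed
    have "(\<Sum>P\<^sub>1\<in>A. real (card ((P\<^sub>2 - Y\<^sub>1) \<inter> P\<^sub>1))) \<le> real (card (P\<^sub>2 - Y\<^sub>1)) * real (card A) / r"
      unfolding A_def using A(3) finite_Sigma_n_elem[OF P\<^sub>2_perm]
      by (intro sum_card_inter_le_if_spread[OF \<H>(3,4)]) (auto simp: A_def)
    also have "\<dots> \<le> (real n - real a) * real (card A) / r"
      using \<open>real (card (P\<^sub>2 - Y\<^sub>1)) \<le> real n - real a\<close> \<H>(4)
      by (intro divide_right_mono mult_right_mono) auto
    finally show "(\<Sum>P\<^sub>1\<in>A. ?x + real (card ((P\<^sub>2 - Y\<^sub>1) \<inter> P\<^sub>1))) \<le> real (card A) * (?x + (real n - real a) / r)"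
      by (simp add: sum.distrib algebra_simps)
  qed
qed

lemma spread_intersection_bound:
  assumes \<F>: "\<F> \<subseteq> Sigma_n n" "s_intersecting t \<F>"
    and \<H>: "\<H>\<^sub>1 \<subseteq> \<F>" "\<H>\<^sub>2 \<subseteq> \<F>" "fam_contain \<H>\<^sub>1 Y\<^sub>1 \<noteq> {}" "fam_contain \<H>\<^sub>2 Y\<^sub>2 \<noteq> {}"
    and spread: "spread r \<H>\<^sub>1 Y\<^sub>1" "spread r \<H>\<^sub>2 Y\<^sub>2" and "0 < r"
  shows "real t \<le> real (card (Y\<^sub>1 \<inter> Y\<^sub>2)) +
           (real (card Y\<^sub>1) - real (card (Y\<^sub>1 \<inter> Y\<^sub>2)) + real n - real (card (Y\<^sub>1 \<inter> Y\<^sub>2))) / r"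
proof -
  define A where "A = fam_contain \<H>\<^sub>2 Y\<^sub>2"
  define a where "a = card (Y\<^sub>1 \<inter> Y\<^sub>2)"
  have "A \<subseteq> \<F>" using \<H>(2) by (auto simp: A_def fam_contain_def)
  then have A: "A \<noteq> {}" "finite A"
    using \<H>(4) finite_subset_Sigma_n[OF order_trans[OF _ \<F>(1)]] by (auto simp: A_def)
  have "finite Y\<^sub>1" using \<H>(1,3) \<F>(1) by (intro finite_if_fam_contain_ne) auto
  then have "card (Y\<^sub>1 - Y\<^sub>2) = card Y\<^sub>1 - a" "a \<le> card Y\<^sub>1"
    by (auto simp: a_def card_Diff_subset_Int Diff_Int2 intro: card_mono)
  then have "real (card (Y\<^sub>1 - Y\<^sub>2)) = real (card Y\<^sub>1) - real a" by (simp add: of_nat_diff)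
  moreover have "(\<Sum>P\<^sub>2\<in>A. real (card ((Y\<^sub>1 - Y\<^sub>2) \<inter> P\<^sub>2))) \<le> real (card (Y\<^sub>1 - Y\<^sub>2)) * real (card A) / r"
    unfolding A_def using A(2) \<open>finite Y\<^sub>1\<close>
    by (intro sum_card_inter_le_if_spread[OF spread(2) \<open>0 < r\<close>]) (auto simp: A_def)
  ultimately have "(\<Sum>P\<^sub>2\<in>A. real a + real (card ((Y\<^sub>1 - Y\<^sub>2) \<inter> P\<^sub>2)) + (real n - real a) / r)
       \<le> real (card A) * real a + (real (card Y\<^sub>1) - real a) * real (card A) / r
          + real (card A) * ((real n - real a) / r)"
    by (simp add: sum.distrib)
  also have "\<dots> = real (card A) * (real a + (real (card Y\<^sub>1) - real a + real n - real a) / r)"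
    using \<open>0 < r\<close> by (simp add: field_simps)
  finally have sum_le: "(\<Sum>P\<^sub>2\<in>A. real a + real (card ((Y\<^sub>1 - Y\<^sub>2) \<inter> P\<^sub>2)) + (real n - real a) / r)
       \<le> real (card A) * (real a + (real (card Y\<^sub>1) - real a + real n - real a) / r)" .
  have pointwise: "real t \<le> real a + real (card ((Y\<^sub>1 - Y\<^sub>2) \<inter> P\<^sub>2)) + (real n - real a) / r"
    if "P\<^sub>2 \<in> A" for P\<^sub>2
  proof -
    have "P\<^sub>2 \<in> \<F>" "Y\<^sub>2 \<subseteq> P\<^sub>2" using that \<open>A \<subseteq> \<F>\<close> by (auto simp: A_def fam_contain_def)
    then show ?thesis
      unfolding a_def by (rule spread_intersection_bound_member[OF \<F> \<H>(1,3) spread(1) \<open>0 < r\<close>])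
  qed
  from le_average_bound[OF A(2,1) pointwise sum_le] show ?thesis by (simp add: a_def)
qed

text \<open>A set maximising the weight \<open>|\<G>[Y]| r\<^bsup>|Y|\<^esup>\<close> is \<open>r\<close>-spread: adding a cell must not increase it.\<close>
lemma exists_spread_set_of_larger_weight:
  assumes "\<G> \<subseteq> Sigma_n n" "0 < r" "X \<subseteq> {1..n} \<times> {1..n}"
  shows "\<exists>Y\<subseteq>{1..n} \<times> {1..n}. spread r \<G> Y \<and>
           real (card (fam_contain \<G> X)) * r ^ card X \<le> real (card (fam_contain \<G> Y)) * r ^ card Y"
proof -
  define w where "w Y = real (card (fam_contain \<G> Y)) * r ^ card Y" for Y
  define m where "m = Max (w ` Pow ({1..n} \<times> {1..n}))"
  have "m \<in> w ` Pow ({1..n} \<times> {1..n})" unfolding m_def by (intro Max_in) auto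
  then obtain Y where Y: "Y \<subseteq> {1..n} \<times> {1..n}" "w Y = m" by blast
  have max: "w Y' \<le> w Y" if "Y' \<subseteq> {1..n} \<times> {1..n}" for Y'
    unfolding Y(2) m_def using that by (intro Max_ge) auto
  have "spread r \<G> Y"
    unfolding spread_def
  proof (intro allI impI)
    fix z assume "z \<notin> Y"
    show "real (card (fam_contain \<G> (insert z Y))) * r \<le> real (card (fam_contain \<G> Y))"
    proof (cases "z \<in> {1..n} \<times> {1..n}")
      case True
      then have "w (insert z Y) \<le> w Y" using Y(1) by (intro max) auto
      moreover have "finite Y" using Y(1) finite_subset by blast
      ultimately show ?thesis using \<open>z \<notin> Y\<close> \<open>0 < r\<close> by (simp add: w_def mult.assoc)
    next
      case False
      then have "fam_contain \<G> (insert z Y) = {}"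
        using assms(1) Sigma_n_subset_grid by (fastforce simp: fam_contain_def)
      then show ?thesis by simp
    qed
  qed
  then show ?thesis using Y(1) max[OF assms(3)] unfolding w_def by blast
qed

lemma greedy_cover:
  fixes c :: real
  assumes "finite \<F>"
    and step: "\<And>\<G>. \<G> \<subseteq> \<F> \<Longrightarrow> c \<le> real (card \<G>) \<Longrightarrow> \<exists>Y. Q \<G> Y \<and> fam_contain \<G> Y \<noteq> {}"
  shows "\<exists>\<S>. (\<forall>Y\<in>\<S>. \<exists>\<G>\<subseteq>\<F>. Q \<G> Y) \<and> real (card (\<F> - fam_contain_any \<F> \<S>)) < c"
proof -
  have "\<exists>\<S>. (\<forall>Y\<in>\<S>. \<exists>\<G>\<subseteq>\<F>. Q \<G> Y) \<and> real (card (\<G> - fam_contain_any \<G> \<S>)) < c"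
    if "\<G> \<subseteq> \<F>" for \<G>
    using that
  proof (induction "card \<G>" arbitrary: \<G> rule: less_induct)
    case less
    show ?case
    proof (cases "c \<le> real (card \<G>)")
      case True
      then obtain Y where Y: "Q \<G> Y" "fam_contain \<G> Y \<noteq> {}" using step less.prems by blast
      define \<G>' where "\<G>' = \<G> - fam_contain \<G> Y"
      have fin: "finite \<G>" using less.prems assms(1) finite_subset by blast
      have "\<G>' \<subset> \<G>" using Y(2) by (auto simp: \<G>'_def fam_contain_def)
      then have "card \<G>' < card \<G>" using fin by (rule psubset_card_mono[rotated])
      then obtain \<S> where \<S>: "\<forall>Y\<in>\<S>. \<exists>\<G>\<subseteq>\<F>. Q \<G> Y" "real (card (\<G>' - fam_contain_any \<G>' \<S>)) < c"
        using less.hyps[of \<G>'] less.prems by (auto simp: \<G>'_def)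
      have "\<G> - fam_contain_any \<G> (insert Y \<S>) = \<G>' - fam_contain_any \<G>' \<S>"
        by (auto simp: \<G>'_def fam_contain_any_def fam_contain_def)
      then show ?thesis using \<S> Y(1) less.prems by (intro exI[of _ "insert Y \<S>"]) auto
    qed (auto intro: exI[of _ "{}"] simp: fam_contain_any_def)
  qed
  then show ?thesis by blast
qed

text \<open>Assertion \<open>(A\<^sub>i)\<close> of the theorem is \<open>cover_property n t ((1-\<delta>)\<^sup>i u) (2\<^sup>i u! / n\<^sup>M)\<close>.\<close>
definition cover_property :: "nat \<Rightarrow> nat \<Rightarrow> real \<Rightarrow> real \<Rightarrow> bool" where
  "cover_property n t k c \<longleftrightarrow> (\<forall>\<F>. \<F> \<subseteq> Sigma_n n \<longrightarrow> s_intersecting t \<F> \<longrightarrow>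
     (\<exists>\<S>. (\<forall>A\<in>\<S>. partial_perm n A) \<and> (\<forall>A\<in>\<S>. real (card A) \<le> real t + k) \<and>
          real (card (\<F> - fam_contain_any \<F> \<S>)) < c \<and>
          s_intersecting (t - nat \<lfloor>sqrt (real n)\<rfloor>) \<S>))"

lemma cover_property_trivial:
  assumes "t \<le> n" "0 < c"
  shows "cover_property n t (real (n - t)) c"
  unfolding cover_property_def
proof (intro allI impI)
  fix \<F> assume \<F>: "\<F> \<subseteq> Sigma_n n" "s_intersecting t \<F>"
  have covered: "\<F> - fam_contain_any \<F> \<F> = {}" by (auto simp: fam_contain_any_def fam_contain_def)
  have "s_intersecting (t - nat \<lfloor>sqrt (real n)\<rfloor>) \<F>"
    using \<F>(2) unfolding s_intersecting_def by (meson diff_le_self le_trans)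
  then show "\<exists>\<S>. (\<forall>A\<in>\<S>. partial_perm n A) \<and> (\<forall>A\<in>\<S>. real (card A) \<le> real t + real (n - t)) \<and>
          real (card (\<F> - fam_contain_any \<F> \<S>)) < c \<and> s_intersecting (t - nat \<lfloor>sqrt (real n)\<rfloor>) \<S>"
    using \<F>(1) assms card_Sigma_n_elem by (intro exI[of _ \<F>]) (auto simp: partial_perm_def covered)
qed

lemma exists_subset_in_many_of_member:
  assumes \<S>: "s_intersecting s \<S>" "A \<in> \<S>" "finite A"
    and \<G>: "finite \<G>" "\<G> \<noteq> {}" "\<G> \<subseteq> fam_contain_any \<H> \<S>"
  shows "\<exists>X\<subseteq>A. card X = s \<and> card \<G> \<le> (card A choose (card A - s)) * card {P\<in>\<G>. X \<subseteq> P}"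
proof -
  define \<X> where "\<X> = {X. X \<subseteq> A \<and> card X = s}"
  have "s \<le> card A" using \<S>(1,2) unfolding s_intersecting_def by fastforce
  then have card_\<X>: "card \<X> = card A choose (card A - s)"
    unfolding \<X>_def using n_subsets[OF \<S>(3)] binomial_symmetric[OF \<open>s \<le> card A\<close>] by simp
  have "\<exists>X\<in>\<X>. X \<subseteq> P" if P: "P \<in> \<G>" for P
  proof -
    obtain B where B: "B \<in> \<S>" "B \<subseteq> P"
      using P \<G>(3) by (auto simp: fam_contain_any_def fam_contain_def)
    have "s \<le> card (A \<inter> B)" using \<S>(1,2) B(1) unfolding s_intersecting_def by blast
    then obtain X where "X \<subseteq> A \<inter> B" "card X = s" by (metis obtain_subset_with_card_n)
    then show ?thesis using B by (auto simp: \<X>_def)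
  qed
  then obtain X where "X \<in> \<X>" "card \<G> \<le> card \<X> * card {P\<in>\<G>. X \<subseteq> P}"
    using exists_subset_in_many[of \<X> \<G>] \<G>(1,2) \<S>(3) by (auto simp: \<X>_def)
  then show ?thesis unfolding card_\<X> by (auto simp: \<X>_def)
qed

lemma cover_property_imp_dense_contain:
  assumes cover: "cover_property n t k c" and \<F>: "\<F> \<subseteq> Sigma_n n" "s_intersecting t \<F>"
    and "2 * c \<le> real (card \<F>)" "nat \<lfloor>sqrt (real n)\<rfloor> \<le> t"
    and binomial: "\<And>m d. m \<le> n \<Longrightarrow> real d \<le> real (nat \<lfloor>sqrt (real n)\<rfloor>) + k \<Longrightarrow>
               2 * real (m choose d) \<le> \<beta>"
  shows "\<exists>X. X \<subseteq> {1..n} \<times> {1..n} \<and> card X = t - nat \<lfloor>sqrt (real n)\<rfloor> \<and>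
             real (card \<F>) / \<beta> \<le> real (card (fam_contain \<F> X))"
proof -
  define s where "s = t - nat \<lfloor>sqrt (real n)\<rfloor>"
  obtain \<S> where \<S>: "\<forall>A\<in>\<S>. real (card A) \<le> real t + k"
    "real (card (\<F> - fam_contain_any \<F> \<S>)) < c" "s_intersecting s \<S>"
    using cover \<F> unfolding cover_property_def s_def by blast
  define \<G> where "\<G> = fam_contain_any \<F> \<S>"
  have \<G>_sub: "\<G> \<subseteq> \<F>" by (auto simp: \<G>_def fam_contain_any_def fam_contain_def)
  have fin: "finite \<F>" "finite \<G>" using \<F>(1) \<G>_sub finite_subset_Sigma_n by (auto intro: finite_subset)
  have "card \<F> = card \<G> + card (\<F> - \<G>)" using \<G>_sub fin by (simp add: card_Diff_subset card_mono)
  then have \<G>_large: "real (card \<F>) < 2 * real (card \<G>)" using \<S>(2) assms(4) by (simp add: \<G>_def)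
  then have "\<G> \<noteq> {}" by auto
  then obtain P\<^sub>0 A where P\<^sub>0: "P\<^sub>0 \<in> \<F>" "A \<in> \<S>" "A \<subseteq> P\<^sub>0"
    by (auto simp: \<G>_def fam_contain_any_def fam_contain_def)
  have P\<^sub>0_perm: "P\<^sub>0 \<in> Sigma_n n" using P\<^sub>0(1) \<F>(1) by blast
  then have "finite A" "card A \<le> n"
    using P\<^sub>0(3) finite_Sigma_n_elem card_Sigma_n_elem card_mono finite_subset by metis+
  obtain X where X: "X \<subseteq> A" "card X = s" "card \<G> \<le> (card A choose (card A - s)) * card {P\<in>\<G>. X \<subseteq> P}"
    using exists_subset_in_many_of_member[OF \<S>(3) P\<^sub>0(2) \<open>finite A\<close> fin(2) \<open>\<G> \<noteq> {}\<close>] by (auto simp: \<G>_def)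
  have "s \<le> card A" using X(1,2) card_mono[OF \<open>finite A\<close>] by blast
  then have "real (card A - s) \<le> real (nat \<lfloor>sqrt (real n)\<rfloor>) + k"
    using \<S>(1) P\<^sub>0(2) assms(5) by (auto simp: s_def)
  then have binomial_A: "2 * real (card A choose (card A - s)) \<le> \<beta>" using binomial \<open>card A \<le> n\<close> by simp
  have "card {P\<in>\<G>. X \<subseteq> P} \<le> card (fam_contain \<F> X)"
    using \<G>_sub fin by (intro card_mono) (auto simp: fam_contain_def)
  then have "card \<G> \<le> (card A choose (card A - s)) * card (fam_contain \<F> X)"
    using X(3) by (meson le_trans mult_le_mono2)
  then have "real (card \<G>) \<le> real (card A choose (card A - s)) * real (card (fam_contain \<F> X))"
    by (metis of_nat_mono of_nat_mult)
  then have "real (card \<F>) < 2 * real (card A choose (card A - s)) * real (card (fam_contain \<F> X))"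
    using \<G>_large by linarith
  also have "\<dots> \<le> \<beta> * real (card (fam_contain \<F> X))"
    using binomial_A by (intro mult_right_mono) auto
  finally have dense: "real (card \<F>) < \<beta> * real (card (fam_contain \<F> X))" .
  have "0 < card A choose (card A - s)" by (intro zero_less_binomial) simp
  then have "0 < \<beta>" using binomial_A by linarith
  moreover have "X \<subseteq> {1..n} \<times> {1..n}" using X(1) P\<^sub>0(3) Sigma_n_subset_grid[OF P\<^sub>0_perm] by blast
  ultimately show ?thesis
    using X(2) dense by (intro exI[of _ X]) (auto simp: s_def pos_divide_le_eq mult.commute)
qed

lemma exists_small_spread_set:
  fixes r \<beta> c k :: real
  assumes \<G>: "\<G> \<subseteq> Sigma_n n" and "0 < r" "0 < \<beta>" "0 < c"
    and X: "X \<subseteq> {1..n} \<times> {1..n}" "c / \<beta> \<le> real (card (fam_contain \<G> X))"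
    and size: "\<And>l. l \<le> n \<Longrightarrow> real t + k < real l \<Longrightarrow> r ^ l * fact (n - l) * \<beta> < r ^ card X * c"
  shows "\<exists>Y. partial_perm n Y \<and> real (card Y) \<le> real t + k \<and> spread r \<G> Y \<and> fam_contain \<G> Y \<noteq> {}"
proof -
  obtain Y where Y: "Y \<subseteq> {1..n} \<times> {1..n}" "spread r \<G> Y"
    "real (card (fam_contain \<G> X)) * r ^ card X \<le> real (card (fam_contain \<G> Y)) * r ^ card Y"
    using exists_spread_set_of_larger_weight[OF \<G> \<open>0 < r\<close> X(1)] by blast
  have "r ^ card X * c \<le> \<beta> * (real (card (fam_contain \<G> X)) * r ^ card X)"
    using X(2) \<open>0 < r\<close> \<open>0 < \<beta>\<close> by (simp add: pos_divide_le_eq mult_ac)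
  also have "\<dots> \<le> \<beta> * (real (card (fam_contain \<G> Y)) * r ^ card Y)"
    using Y(3) \<open>0 < \<beta>\<close> by simp
  finally have weight: "r ^ card X * c \<le> \<beta> * (real (card (fam_contain \<G> Y)) * r ^ card Y)" .
  moreover have "0 < r ^ card X * c" using \<open>0 < r\<close> \<open>0 < c\<close> by simp
  ultimately have "fam_contain \<G> Y \<noteq> {}" by (metis card.empty mult_zero_left mult_zero_right not_le of_nat_0)
  then obtain P where P: "P \<in> Sigma_n n" "Y \<subseteq> P" using \<G> by (auto simp: fam_contain_def)
  then have "partial_perm n Y" by (auto simp: partial_perm_def)
  have "card Y \<le> n" using P card_mono[OF finite_Sigma_n_elem] card_Sigma_n_elem by metis
  have "real (card Y) \<le> real t + k"
  proof (rule ccontr)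
    assume "\<not> ?thesis"
    then have "r ^ card Y * fact (n - card Y) * \<beta> < r ^ card X * c"
      using size \<open>card Y \<le> n\<close> by simp
    also have "\<dots> \<le> \<beta> * (real (card (fam_contain \<G> Y)) * r ^ card Y)" by (rule weight)
    also have "\<dots> \<le> \<beta> * (fact (n - card Y) * r ^ card Y)"
    proof -
      have "real (card (fam_contain \<G> Y)) \<le> fact (n - card Y)"
        using card_fam_contain_le[OF \<G>, of Y] by (metis of_nat_fact of_nat_le_iff)
      then show ?thesis using \<open>0 < r\<close> \<open>0 < \<beta>\<close> by (intro mult_left_mono mult_right_mono) auto
    qed
    finally show False by (simp add: mult_ac)
  qed
  then show ?thesis using \<open>partial_perm n Y\<close> Y(2) \<open>fam_contain \<G> Y \<noteq> {}\<close> by blast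
qed

lemma spread_sets_intersecting:
  assumes \<F>: "\<F> \<subseteq> Sigma_n n" "s_intersecting t \<F>" and "0 < r"
    and \<S>: "\<And>Y. Y \<in> \<S> \<Longrightarrow> \<exists>\<G>\<subseteq>\<F>. fam_contain \<G> Y \<noteq> {} \<and> spread r \<G> Y \<and> real (card Y) \<le> real t + k"
    and inter: "\<And>a y. a < s \<Longrightarrow> real y \<le> real t + k \<Longrightarrow> a \<le> y \<Longrightarrow>
                  real a + (real y - real a + real n - real a) / r < real t"
  shows "s_intersecting s \<S>"
  unfolding s_intersecting_def
proof (intro ballI)
  fix Y\<^sub>1 Y\<^sub>2 assume "Y\<^sub>1 \<in> \<S>" "Y\<^sub>2 \<in> \<S>"
  then obtain \<G>\<^sub>1 \<G>\<^sub>2 where \<G>: "\<G>\<^sub>1 \<subseteq> \<F>" "fam_contain \<G>\<^sub>1 Y\<^sub>1 \<noteq> {}" "spread r \<G>\<^sub>1 Y\<^sub>1"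
      "real (card Y\<^sub>1) \<le> real t + k" "\<G>\<^sub>2 \<subseteq> \<F>" "fam_contain \<G>\<^sub>2 Y\<^sub>2 \<noteq> {}" "spread r \<G>\<^sub>2 Y\<^sub>2"
    using \<S> by metis
  have bound: "real t \<le> real (card (Y\<^sub>1 \<inter> Y\<^sub>2)) +
         (real (card Y\<^sub>1) - real (card (Y\<^sub>1 \<inter> Y\<^sub>2)) + real n - real (card (Y\<^sub>1 \<inter> Y\<^sub>2))) / r"
    by (rule spread_intersection_bound[OF \<F> \<G>(1,5,2,6,3,7) \<open>0 < r\<close>])
  have "finite Y\<^sub>1" using \<G>(1,2) \<F>(1) by (intro finite_if_fam_contain_ne) auto
  then have "card (Y\<^sub>1 \<inter> Y\<^sub>2) \<le> card Y\<^sub>1" by (simp add: card_mono)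
  then show "s \<le> card (Y\<^sub>1 \<inter> Y\<^sub>2)" using inter[OF _ \<G>(4)] bound by (meson not_le not_less)
qed

text \<open>Greedily remove \<open>\<G>[Y]\<close> for weight maximisers \<open>Y\<close> above the dense sets \<open>X\<close> supplied by
  \<open>dense\<close>; \<open>size\<close> keeps these \<open>Y\<close> small, \<open>inter\<close> makes them pairwise \<open>s\<close>-intersecting.\<close>
lemma dense_contain_imp_cover_property:
  fixes n t :: nat and r \<beta> c k :: real
  defines "s \<equiv> t - nat \<lfloor>sqrt (real n)\<rfloor>"
  assumes dense: "\<And>\<G>. \<G> \<subseteq> Sigma_n n \<Longrightarrow> s_intersecting t \<G> \<Longrightarrow> c \<le> real (card \<G>) \<Longrightarrow>
      \<exists>X. X \<subseteq> {1..n} \<times> {1..n} \<and> card X = s \<and> real (card \<G>) / \<beta> \<le> real (card (fam_contain \<G> X))"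
    and "0 < r" "0 < \<beta>" "0 < c"
    and size: "\<And>l. l \<le> n \<Longrightarrow> real t + k < real l \<Longrightarrow> r ^ l * fact (n - l) * \<beta> < r ^ s * c"
    and inter: "\<And>a y. a < s \<Longrightarrow> real y \<le> real t + k \<Longrightarrow> a \<le> y \<Longrightarrow>
                  real a + (real y - real a + real n - real a) / r < real t"
  shows "cover_property n t k c"
  unfolding cover_property_def
proof (intro allI impI)
  fix \<F> assume \<F>: "\<F> \<subseteq> Sigma_n n" "s_intersecting t \<F>"
  define Q where "Q \<G> Y \<longleftrightarrow> partial_perm n Y \<and> real (card Y) \<le> real t + k \<and> spread r \<G> Y \<and>
    fam_contain \<G> Y \<noteq> {}" for \<G> Y
  have step: "\<exists>Y. Q \<G> Y \<and> fam_contain \<G> Y \<noteq> {}" if "\<G> \<subseteq> \<F>" and large: "c \<le> real (card \<G>)" for \<G>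
  proof -
    have \<G>: "\<G> \<subseteq> Sigma_n n" "s_intersecting t \<G>" using that \<F> s_intersecting_subset by auto
    obtain X where X: "X \<subseteq> {1..n} \<times> {1..n}" "card X = s" "real (card \<G>) / \<beta> \<le> real (card (fam_contain \<G> X))"
      using dense[OF \<G> large] by blast
    have c_X: "c / \<beta> \<le> real (card (fam_contain \<G> X))"
      using X(3) large \<open>0 < \<beta>\<close> by (meson divide_right_mono less_imp_le order_trans)
    have size_X: "r ^ l * fact (n - l) * \<beta> < r ^ card X * c" if "l \<le> n" "real t + k < real l" for l
      using size[OF that] X(2) by simp
    from exists_small_spread_set[OF \<G>(1) \<open>0 < r\<close> \<open>0 < \<beta>\<close> \<open>0 < c\<close> X(1) c_X size_X]
    show ?thesis unfolding Q_def by blast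
  qed
  obtain \<S> where \<S>: "\<forall>Y\<in>\<S>. \<exists>\<G>\<subseteq>\<F>. Q \<G> Y" "real (card (\<F> - fam_contain_any \<F> \<S>)) < c"
    using greedy_cover[OF finite_subset_Sigma_n[OF \<F>(1)] step] by blast
  have "\<exists>\<G>\<subseteq>\<F>. fam_contain \<G> Y \<noteq> {} \<and> spread r \<G> Y \<and> real (card Y) \<le> real t + k" if "Y \<in> \<S>" for Y
    using \<S>(1) that unfolding Q_def by blast
  then have "s_intersecting s \<S>" by (rule spread_sets_intersecting[OF \<F> \<open>0 < r\<close> _ inter])
  then show "\<exists>\<S>. (\<forall>A\<in>\<S>. partial_perm n A) \<and> (\<forall>A\<in>\<S>. real (card A) \<le> real t + k) \<and>
          real (card (\<F> - fam_contain_any \<F> \<S>)) < c \<and> s_intersecting (t - nat \<lfloor>sqrt (real n)\<rfloor>) \<S>"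
    using \<S> by (auto simp: Q_def s_def)
qed

locale asymptotic_regime =
  fixes \<delta> M :: real and n t :: nat
  assumes delta_pos: "0 < \<delta>" and delta_less: "\<delta> < 1/2"
    and n_gt_1: "1 < real n"
    and log_bound: "ln 2 + 1 + real n powr (-2*\<delta>) * ln (real n) / 2 \<le> \<delta>/2 * ln (real n)"
    and sqrt_bound: "sqrt (real n) + M < \<delta>/2 * real n powr (1/2 + 2*\<delta>)"
    and exp_bound: "60 * exp 1 \<le> real n powr (\<delta>/2)"
    and sqrt_le_t: "sqrt (real n) \<le> real t"
    and t_less: "real t < real n - real n powr (1/2 + 2*\<delta>)"
begin

abbreviation "u \<equiv> n - t"
abbreviation "q \<equiv> nat \<lfloor>sqrt (real n)\<rfloor>"
abbreviation "\<rho> \<equiv> 10 * real n powr (1/2 - \<delta>)"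

text \<open>The spread ratio: small enough that weight maximisers have at most \<open>t + k\<close> cells
  (\<open>size_bound\<close>), large enough that spread sets pairwise share \<open>t - \<surd>n\<close> cells
  (\<open>intersection_bound\<close>).\<close>
definition r :: real where "r = real u / (exp 1 * \<rho> * real n powr (\<delta>/2))"

lemma sqrt_eq_powr: "sqrt (real n) = real n powr (1/2)"
  using n_gt_1 by (simp add: powr_half_sqrt)

lemma real_q: "real q = of_int \<lfloor>sqrt (real n)\<rfloor>"
  by simp

lemma q_le_sqrt: "real q \<le> sqrt (real n)"
  unfolding real_q by simp

lemma sqrt_less_Suc_q: "sqrt (real n) < real q + 1"
  unfolding real_q by linarith

lemma q_le_t: "q \<le> t"
  using q_le_sqrt sqrt_le_t by linarith

lemma t_less_n: "t < n"
proof -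
  have "real t < real n" using t_less powr_ge_zero[of "real n" "1/2 + 2*\<delta>"] by linarith
  then show ?thesis by simp
qed

lemma u_eq: "real u = real n - real t"
  using t_less_n by (simp add: of_nat_diff)

lemma powr_less_u: "real n powr (1/2 + 2*\<delta>) < real u"
  using t_less u_eq by linarith

lemma sqrt_le_u: "sqrt (real n) \<le> real u"
proof -
  have "sqrt (real n) \<le> real n powr (1/2 + 2*\<delta>)"
    unfolding sqrt_eq_powr using n_gt_1 delta_pos by (intro powr_mono) auto
  then show ?thesis using powr_less_u by linarith
qed

lemma u_le_n: "real u \<le> real n"
  by simp

lemma u_pos: "0 < u"
  using t_less_n by simp

lemma rho_ge_1: "1 \<le> \<rho>"
proof -
  have "1 \<le> real n powr (1/2 - \<delta>)" using n_gt_1 delta_less by (simp add: ge_one_powr_ge_zero)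
  then show ?thesis by simp
qed

lemma r_pos: "0 < r"
  using u_pos rho_ge_1 n_gt_1 by (simp add: r_def)

lemma binomial_le_exp:
  assumes "real m \<le> real n" "real d \<le> real q + k"
    and k: "real n powr (1/2 + 2*\<delta>) \<le> k" "k \<le> real n"
  shows "2 * real (m choose d) \<le> exp (ln 2 + (1/2 - 2*\<delta>) * ln (real n) * (real q + k) + k)"
proof -
  have "1 \<le> real n powr (1/2 + 2*\<delta>)" using n_gt_1 delta_pos by (simp add: ge_one_powr_ge_zero)
  then have "0 < k" using k by linarith
  have n_div_k: "1 \<le> real n / k" "real n / k \<le> real n powr (1/2 - 2*\<delta>)"
  proof -
    show "1 \<le> real n / k" using k \<open>0 < k\<close> by simp
    have "real n / k \<le> real n / real n powr (1/2 + 2*\<delta>)"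
      using k \<open>0 < k\<close> n_gt_1 by (intro divide_left_mono) auto
    also have "\<dots> = real n powr 1 / real n powr (1/2 + 2*\<delta>)" by simp
    also have "\<dots> = real n powr (1 - (1/2 + 2*\<delta>))" by (rule powr_diff[symmetric])
    also have "1 - (1/2 + 2*\<delta>) = 1/2 - 2*\<delta>" by simp
    finally show "real n / k \<le> real n powr (1/2 - 2*\<delta>)" .
  qed
  have "real (m choose d) \<le> real n ^ d / fact d"
    using binomial_le_pow_div_fact[of m d] assms(1)
    by (meson divide_right_mono fact_ge_zero order_trans power_mono of_nat_0_le_iff)
  also have "\<dots> = (real n / k) ^ d * (k ^ d / fact d)" using \<open>0 < k\<close> by (simp add: power_divide)
  also have "\<dots> \<le> (real n / k) powr (real q + k) * exp k"
  proof (intro mult_mono)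
    show "(real n / k) ^ d \<le> (real n / k) powr (real q + k)"
      using n_div_k(1) assms(2) by (simp add: powr_realpow[symmetric] powr_mono)
    show "k ^ d / fact d \<le> exp k" using \<open>0 < k\<close> by (intro pow_div_fact_le_exp) simp
  qed (use \<open>0 < k\<close> in auto)
  also have "(real n / k) powr (real q + k) \<le> (real n powr (1/2 - 2*\<delta>)) powr (real q + k)"
    using n_div_k \<open>0 < k\<close> by (intro powr_mono2) auto
  also have "\<dots> = exp ((1/2 - 2*\<delta>) * ln (real n) * (real q + k))"
    using n_gt_1 by (simp add: powr_powr powr_def mult_ac)
  finally show ?thesis by (simp add: exp_add)
qed

lemma binomial_exponent_le:
  assumes k: "real n powr (1/2 + 2*\<delta>) \<le> k"
  shows "ln 2 + (1/2 - 2*\<delta>) * ln (real n) * (real q + k) + k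
           \<le> (1-\<delta>) * k * (ln 10 + (1/2-\<delta>) * ln (real n))"
proof -
  have "1 \<le> real n powr (1/2 + 2*\<delta>)" using n_gt_1 delta_pos by (simp add: ge_one_powr_ge_zero)
  then have "1 \<le> k" using k by linarith
  have ln_n: "0 \<le> ln (real n)" using n_gt_1 by simp
  have q_le: "real q \<le> k * real n powr (-2*\<delta>)"
  proof -
    have "sqrt (real n) = real n powr (1/2 + 2*\<delta>) * real n powr (-2*\<delta>)"
      unfolding sqrt_eq_powr by (simp add: powr_add[symmetric])
    also have "\<dots> \<le> k * real n powr (-2*\<delta>)" using k by (intro mult_right_mono) auto
    finally show ?thesis using q_le_sqrt by linarith
  qed
  have q_term: "(1/2 - 2*\<delta>) * ln (real n) * real q \<le> (1/2) * ln (real n) * (k * real n powr (-2*\<delta>))"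
  proof -
    have "(1/2 - 2*\<delta>) * ln (real n) * real q \<le> (1/2) * ln (real n) * real q"
      using ln_n delta_pos by (intro mult_right_mono) auto
    also have "\<dots> \<le> (1/2) * ln (real n) * (k * real n powr (-2*\<delta>))"
      using q_le ln_n by (intro mult_left_mono) auto
    finally show ?thesis .
  qed
  have log_term: "k * (ln 2 + 1 + real n powr (-2*\<delta>) * ln (real n) / 2) \<le> k * (\<delta>/2 * ln (real n))"
    using log_bound \<open>1 \<le> k\<close> by (intro mult_left_mono) auto
  have ln2_term: "ln 2 \<le> k * ln 2" using \<open>1 \<le> k\<close> by simp
  have nonneg_10: "0 \<le> (1-\<delta>) * k * ln 10" and nonneg_\<delta>: "0 \<le> \<delta> * \<delta> * k * ln (real n)"
    using delta_less \<open>1 \<le> k\<close> ln_n by simp_all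
  have "ln 2 + (1/2 - 2*\<delta>) * ln (real n) * (real q + k) + k
      = ln 2 + (1/2 - 2*\<delta>) * ln (real n) * real q + (1/2 - 2*\<delta>) * ln (real n) * k + k"
    by (simp add: algebra_simps)
  also have "\<dots> \<le> k * ln 2 + (1/2) * ln (real n) * (k * real n powr (-2*\<delta>))
                  + (1/2 - 2*\<delta>) * ln (real n) * k + k"
    using q_term ln2_term by linarith
  also have "\<dots> = k * (ln 2 + 1 + real n powr (-2*\<delta>) * ln (real n) / 2) + (1/2 - 2*\<delta>) * ln (real n) * k"
    by (simp add: algebra_simps)
  also have "\<dots> \<le> k * (\<delta>/2 * ln (real n)) + (1/2 - 2*\<delta>) * ln (real n) * k"
    using log_term by linarith
  also have "\<dots> = (1-\<delta>) * k * ((1/2-\<delta>) * ln (real n)) - \<delta> * \<delta> * k * ln (real n)"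
    by (simp add: algebra_simps)
  also have "\<dots> \<le> (1-\<delta>) * k * (ln 10 + (1/2-\<delta>) * ln (real n))"
    using nonneg_10 nonneg_\<delta> by (simp add: algebra_simps)
  finally show ?thesis .
qed

lemma binomial_le_rho_powr:
  assumes "real m \<le> real n" "real d \<le> real q + k"
    and "real n powr (1/2 + 2*\<delta>) \<le> k" "k \<le> real n"
  shows "2 * real (m choose d) \<le> \<rho> powr ((1-\<delta>) * k)"
proof -
  have "2 * real (m choose d) \<le> exp (ln 2 + (1/2 - 2*\<delta>) * ln (real n) * (real q + k) + k)"
    by (rule binomial_le_exp[OF assms])
  also have "\<dots> \<le> exp ((1-\<delta>) * k * (ln 10 + (1/2-\<delta>) * ln (real n)))"
    using binomial_exponent_le[OF assms(3)] by simp
  also have "\<dots> = \<rho> powr ((1-\<delta>) * k)"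
    using n_gt_1 by (simp add: powr_def ln_mult)
  finally show ?thesis .
qed


lemma r_le_n: "r \<le> real n"
proof -
  have "1 \<le> real n powr (\<delta>/2)" using n_gt_1 delta_pos by (simp add: ge_one_powr_ge_zero)
  moreover have "1 \<le> exp 1 * \<rho>" using mult_mono[of 1 "exp 1" 1 \<rho>] rho_ge_1 by simp
  ultimately have "1 \<le> exp 1 * \<rho> * real n powr (\<delta>/2)"
    using mult_mono[of 1 "exp 1 * \<rho>" 1 "real n powr (\<delta>/2)"] by simp
  then have "r \<le> real u / 1" unfolding r_def by (intro divide_left_mono) (use n_gt_1 in auto)
  then show ?thesis using u_le_n by simp
qed

lemma r_pow_q_bound:
  assumes "real n powr (1/2 + 2*\<delta>) \<le> k"
  shows "r ^ q * real n powr M < real n powr (\<delta>/2 * k)"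
proof -
  have "r ^ q \<le> real n ^ q" using r_pos r_le_n by (intro power_mono) auto
  also have "\<dots> = real n powr real q" using n_gt_1 by (intro powr_realpow[symmetric]) simp
  also have "\<dots> \<le> real n powr sqrt (real n)" using n_gt_1 q_le_sqrt by (intro powr_mono) auto
  finally have "r ^ q * real n powr M \<le> real n powr (sqrt (real n) + M)"
    by (simp add: powr_add mult_right_mono)
  also have "\<dots> < real n powr (\<delta>/2 * k)"
  proof -
    have "\<delta>/2 * real n powr (1/2 + 2*\<delta>) \<le> \<delta>/2 * k" using assms delta_pos by (intro mult_left_mono) auto
    then show ?thesis using sqrt_bound n_gt_1 by (intro powr_less_mono) auto
  qed
  finally show ?thesis .
qed

text \<open>With \<open>B = \<rho> n\<^sup>\<delta>\<^sup>/\<^sup>2\<close> we have \<open>r B = u/e\<close>, and \<open>(u-m)! (u/e)\<^sup>m \<le> u!\<close>.\<close>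
lemma weight_bound:
  assumes k: "real n powr (1/2 + 2*\<delta>) \<le> k" "k < real m" and "m \<le> u"
  shows "r ^ (m + q) * fact (u - m) * \<rho> powr k * real n powr M < fact u"
proof -
  define B where "B = \<rho> * real n powr (\<delta>/2)"
  have "1 \<le> real n powr (\<delta>/2)" using n_gt_1 delta_pos by (simp add: ge_one_powr_ge_zero)
  then have "1 \<le> B" unfolding B_def using rho_ge_1 by (metis mult_mono' mult_1 zero_le_one)
  have r_eq: "r = real u / (exp 1 * B)" by (simp add: r_def B_def mult.assoc)
  have "\<rho> powr k * (r ^ q * real n powr M) < \<rho> powr k * real n powr (\<delta>/2 * k)"
    using r_pow_q_bound[OF k(1)] rho_ge_1 n_gt_1 by (intro mult_strict_left_mono) auto
  also have "\<dots> = B powr k" unfolding B_def using rho_ge_1 n_gt_1 by (simp add: powr_mult powr_powr)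
  also have "\<dots> \<le> B ^ m" using \<open>1 \<le> B\<close> k(2) by (simp add: powr_realpow[symmetric] powr_mono)
  finally have key: "r ^ q * (\<rho> powr k * real n powr M) < B ^ m" by (simp add: mult_ac)
  have "r ^ (m + q) * fact (u - m) * \<rho> powr k * real n powr M
      = fact (u - m) * r ^ m * (r ^ q * (\<rho> powr k * real n powr M))"
    by (simp add: power_add mult_ac)
  also have "\<dots> < fact (u - m) * r ^ m * B ^ m" using key r_pos by simp
  also have "\<dots> = fact (u - m) * (real u / exp 1) ^ m"
    using \<open>1 \<le> B\<close> by (simp add: r_eq power_mult_distrib[symmetric])
  also have "\<dots> \<le> fact u" by (rule fact_diff_mult_le_fact[OF \<open>m \<le> u\<close>])
  finally show ?thesis .
qed

lemma size_bound:
  assumes k: "real n powr (1/2 + 2*\<delta>) \<le> k" and l: "l \<le> n" "real t + k < real l"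
  shows "r ^ l * fact (n - l) * \<rho> powr k < r ^ (t - q) * (fact u / real n powr M)"
proof -
  define m where "m = l - t"
  have "0 \<le> k" using k by (metis order_trans powr_ge_zero)
  then have "t < l" using l by linarith
  have "k < real m" "m \<le> u" using l \<open>t < l\<close> by (auto simp: m_def of_nat_diff)
  have "r ^ l = r ^ (t - q) * r ^ (m + q)"
    using \<open>t < l\<close> q_le_t by (simp add: m_def power_add[symmetric])
  moreover have "n - l = u - m" using \<open>t < l\<close> by (simp add: m_def)
  ultimately have "r ^ l * fact (n - l) * \<rho> powr k = r ^ (t - q) * (r ^ (m + q) * fact (u - m) * \<rho> powr k)"
    by (simp add: mult_ac)
  also have "\<dots> < r ^ (t - q) * (fact u / real n powr M)"
    using weight_bound[OF k \<open>k < real m\<close> \<open>m \<le> u\<close>] n_gt_1 r_pos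
    by (intro mult_strict_left_mono) (auto simp: less_divide_eq)
  finally show ?thesis .
qed

lemma intersection_bound:
  assumes "a < t - q" "real y \<le> real t + k" "k \<le> real u"
  shows "real a + (real y - real a + real n - real a) / r < real t"
proof -
  define L where "L = exp 1 * \<rho> * real n powr (\<delta>/2)"
  have "0 < L" unfolding L_def using n_gt_1 by simp
  have r_eq: "r = real u / L" by (simp add: r_def L_def)
  have "6 * L = (60 * exp 1) * (real n powr (1/2 - \<delta>) * real n powr (\<delta>/2))" by (simp add: L_def)
  also have "\<dots> \<le> real n powr (\<delta>/2) * (real n powr (1/2 - \<delta>) * real n powr (\<delta>/2))"
    using exp_bound by (intro mult_right_mono) auto
  also have "\<dots> = sqrt (real n)" unfolding sqrt_eq_powr by (simp flip: powr_add)
  finally have "6 * L \<le> sqrt (real n)" .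
  then have "6 \<le> r" using sqrt_le_u \<open>0 < L\<close> unfolding r_eq by (simp add: le_divide_eq)
  have "real a \<le> real t - real q - 1" using assms(1) q_le_t by linarith
  have "real a + (real y - real a + real n - real a) / r = real a * (1 - 2 / r) + (real y + real n) / r"
    using r_pos by (simp add: field_simps)
  also have "\<dots> \<le> (real t - real q - 1) * (1 - 2 / r) + (real t + k + real n) / r"
    using \<open>real a \<le> real t - real q - 1\<close> \<open>6 \<le> r\<close> assms(2) r_pos
    by (intro add_mono mult_right_mono divide_right_mono) auto
  also have "\<dots> = real t - real q - 1 + (k + real u + 2 * real q + 2) / r"
    using r_pos u_eq by (simp add: field_simps)
  also have "\<dots> \<le> real t - real q - 1 + 6 * real u / r"
  proof -
    have "1 \<le> real u" using u_pos by simp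
    then have "k + real u + 2 * real q + 2 \<le> 6 * real u"
      using assms(3) q_le_sqrt sqrt_le_u by linarith
    then show ?thesis using r_pos by (intro add_left_mono divide_right_mono) auto
  qed
  also have "6 * real u / r = 6 * L"
  proof -
    have cancel: "6 * x / (x / L) = 6 * L" if "0 < x" for x :: real
      using that \<open>0 < L\<close> by (simp add: field_simps)
    show ?thesis unfolding r_eq using u_pos by (intro cancel) simp
  qed
  finally show ?thesis using \<open>6 * L \<le> sqrt (real n)\<close> sqrt_less_Suc_q by linarith
qed

lemma dense_contain:
  assumes "cover_property n t k c" "real n powr (1/2 + 2*\<delta>) \<le> k" "k \<le> real u"
    and "\<F> \<subseteq> Sigma_n n" "s_intersecting t \<F>" "2 * c \<le> real (card \<F>)"
  shows "\<exists>X. X \<subseteq> {1..n} \<times> {1..n} \<and> card X = t - q \<and>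
           real (card \<F>) / \<rho> powr ((1-\<delta>) * k) \<le> real (card (fam_contain \<F> X))"
  using assms(2,3) u_le_n
  by (intro cover_property_imp_dense_contain[OF assms(1,4,5,6) q_le_t] binomial_le_rho_powr) auto

lemma cover_step:
  assumes cover: "cover_property n t k c"
    and k: "real n powr (1/2 + 2*\<delta>) \<le> (1-\<delta>) * k" "k \<le> real u"
    and c: "0 < c" "fact u / real n powr M \<le> 2 * c"
  shows "cover_property n t ((1-\<delta>) * k) (2 * c)"
proof (rule dense_contain_imp_cover_property[where \<beta> = "\<rho> powr ((1-\<delta>) * k)" and r = r])
  have "0 \<le> (1-\<delta>) * k" using k(1) by (meson order_trans powr_ge_zero)
  then have "0 \<le> k" using delta_less by (simp add: zero_le_mult_iff)
  then have "(1-\<delta>) * k \<le> k" using delta_pos delta_less by (intro mult_left_le_one_le) auto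
  then show "\<exists>X. X \<subseteq> {1..n} \<times> {1..n} \<and> card X = t - q \<and>
      real (card \<G>) / \<rho> powr ((1-\<delta>) * k) \<le> real (card (fam_contain \<G> X))"
    if "\<G> \<subseteq> Sigma_n n" "s_intersecting t \<G>" "2 * c \<le> real (card \<G>)" for \<G>
    using dense_contain[OF cover order_trans[OF k(1) \<open>(1-\<delta>) * k \<le> k\<close>] k(2) that] by blast
  show "real a + (real y - real a + real n - real a) / r < real t"
    if "a < t - q" "real y \<le> real t + (1-\<delta>) * k" for a y
    using intersection_bound[OF that] \<open>(1-\<delta>) * k \<le> k\<close> k(2) by linarith
  show "r ^ l * fact (n - l) * \<rho> powr ((1-\<delta>) * k) < r ^ (t - q) * (2 * c)"
    if "l \<le> n" "real t + (1-\<delta>) * k < real l" for l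
  proof -
    have "r ^ l * fact (n - l) * \<rho> powr ((1-\<delta>) * k) < r ^ (t - q) * (fact u / real n powr M)"
      by (rule size_bound[OF k(1) that])
    also have "\<dots> \<le> r ^ (t - q) * (2 * c)" using c(2) r_pos by (intro mult_left_mono) auto
    finally show ?thesis .
  qed
qed (use r_pos n_gt_1 c(1) in auto)

lemma decay_le_u: "(1-\<delta>)^i * real u \<le> real u"
  using delta_pos delta_less by (intro mult_left_le_one_le power_le_one) auto

lemma cover_property_iterated:
  assumes "real n powr (1/2 + 2*\<delta>) < (1-\<delta>)^i * real u"
  shows "cover_property n t ((1-\<delta>)^i * real u) (2^i / real n powr M * fact u)"
  using assms
proof (induction i)
  case 0
  show ?case using cover_property_trivial[of t n] t_less_n n_gt_1 by simp
next
  case (Suc i)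
  have "(1-\<delta>)^(Suc i) * real u \<le> (1-\<delta>)^i * real u"
    using delta_pos delta_less by (intro mult_right_mono power_decreasing) auto
  then have IH: "cover_property n t ((1-\<delta>)^i * real u) (2^i / real n powr M * fact u)"
    using Suc by simp
  have "fact u / real n powr M \<le> 2 ^ Suc i * (fact u / real n powr M)"
    using mult_right_mono[OF one_le_power[of "2::real" "Suc i"], of "fact u / real n powr M"] by simp
  then have "cover_property n t ((1-\<delta>) * ((1-\<delta>)^i * real u)) (2 * (2^i / real n powr M * fact u))"
    using Suc.prems n_gt_1 by (intro cover_step[OF IH _ decay_le_u]) (simp_all add: mult_ac)
  then show ?case by (simp add: mult_ac)
qed

lemma dense_link:
  assumes "real n powr (1/2 + 2*\<delta>) < (1-\<delta>)^i * real u"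
    and "\<F> \<subseteq> Sigma_n n" "s_intersecting t \<F>" "2^(i+1) / real n powr M * fact u \<le> real (card \<F>)"
  shows "\<exists>X. X \<subseteq> {1..n} \<times> {1..n} \<and> card X = t - q \<and>
           \<rho> powr (- ((1-\<delta>)^(i+1) * real u)) * real (card \<F>) \<le> real (card (fam_link \<F> X))"
proof -
  have "real n powr (1/2 + 2*\<delta>) \<le> (1-\<delta>)^i * real u" using assms(1) by simp
  moreover have "2 * (2^i / real n powr M * fact u) \<le> real (card \<F>)" using assms(4) by simp
  ultimately obtain X where "X \<subseteq> {1..n} \<times> {1..n}" "card X = t - q"
      "real (card \<F>) / \<rho> powr ((1-\<delta>) * ((1-\<delta>)^i * real u)) \<le> real (card (fam_contain \<F> X))"
    using dense_contain[OF cover_property_iterated[OF assms(1)] _ decay_le_u assms(2,3)] by blast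
  moreover have "\<rho> powr (- ((1-\<delta>)^(i+1) * real u)) * real (card \<F>)
      = real (card \<F>) / \<rho> powr ((1-\<delta>) * ((1-\<delta>)^i * real u))"
    by (simp only: power_Suc Suc_eq_plus1[symmetric] mult.assoc powr_minus divide_inverse_commute)
  ultimately show ?thesis by (auto simp: card_fam_link)
qed

end

lemma eventually_asymptotic_regime:
  assumes "0 < \<delta>" "\<delta> < 1/2"
  shows "\<exists>n0::nat. \<forall>n>n0. \<forall>t::nat. real n powr 0.99 < real t \<longrightarrow>
           real t < real n - real n powr (1/2 + 2*\<delta>) \<longrightarrow> asymptotic_regime \<delta> M n t"
proof -
  have "eventually (\<lambda>n::nat. (ln 2 + 1 + real n powr (-2*\<delta>) * ln (real n) / 2 \<le> \<delta>/2 * ln (real n)) \<and>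
     (sqrt (real n) + M < \<delta>/2 * real n powr (1/2 + 2*\<delta>)) \<and>
     (60 * exp 1 \<le> real n powr (\<delta>/2)) \<and> 1 < real n) at_top"
    using assms by (intro eventually_conj) real_asymp+
  then obtain n0 where n0: "\<forall>n\<ge>n0. (ln 2 + 1 + real n powr (-2*\<delta>) * ln (real n) / 2 \<le> \<delta>/2 * ln (real n)) \<and>
     (sqrt (real n) + M < \<delta>/2 * real n powr (1/2 + 2*\<delta>)) \<and>
     (60 * exp 1 \<le> real n powr (\<delta>/2)) \<and> 1 < real n"
    unfolding eventually_at_top_linorder by blast
  have "asymptotic_regime \<delta> M n t"
    if "n0 < n" "real n powr 0.99 < real t" "real t < real n - real n powr (1/2 + 2*\<delta>)" for n t :: nat
  proof -
    have "1 < real n" using n0 that(1) by auto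
    then have "sqrt (real n) \<le> real n powr 0.99" by (simp add: powr_half_sqrt[symmetric] powr_mono)
    then show ?thesis using n0 that assms by unfold_locales auto
  qed
  then show ?thesis by blast
qed

theorem lemma3p2:
  fixes \<delta> M :: real
  assumes "0 < \<delta>" "\<delta> < 1/2" "0 < M"
  shows "\<exists>n0::nat. \<forall>n t :: nat. n > n0 \<longrightarrow>
           real n powr 0.99 < real t \<longrightarrow> real t < real n - real n powr (1/2 + 2*\<delta>) \<longrightarrow>
           (\<forall>i::nat. (1-\<delta>)^i * real (n - t) > real n powr (1/2 + 2*\<delta>) \<longrightarrow>
             ((\<forall>\<F>. \<F> \<subseteq> Sigma_n n \<longrightarrow> s_intersecting t \<F> \<longrightarrow>
                 (\<exists>\<S>. (\<forall>A\<in>\<S>. partial_perm n A) \<and>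
                       (\<forall>A\<in>\<S>. real (card A) \<le> real t + (1-\<delta>)^i * real (n - t)) \<and>
                       real (card (\<F> - fam_contain_any \<F> \<S>)) < 2^i / real n powr M * fact (n - t) \<and>
                       s_intersecting (t - nat \<lfloor>sqrt (real n)\<rfloor>) \<S>))
              \<and>
              (\<forall>\<F>. \<F> \<subseteq> Sigma_n n \<longrightarrow> s_intersecting t \<F> \<longrightarrow>
                 real (card \<F>) \<ge> 2^(i+1) / real n powr M * fact (n - t) \<longrightarrow>
                 (\<exists>X. X \<subseteq> {1..n} \<times> {1..n} \<and> card X = t - nat \<lfloor>sqrt (real n)\<rfloor> \<and>
                      real (card (fam_link \<F> X)) \<ge>
                        (10 * real n powr (1/2 - \<delta>)) powr (- ((1-\<delta>)^(i+1) * real (n - t)))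
                          * real (card \<F>)))))"
proof -
  obtain n0 :: nat where n0: "\<forall>n>n0. \<forall>t. real n powr 0.99 < real t \<longrightarrow>
      real t < real n - real n powr (1/2 + 2*\<delta>) \<longrightarrow> asymptotic_regime \<delta> M n t"
    using eventually_asymptotic_regime[OF assms(1,2)] by blast
  show ?thesis
    unfolding cover_property_def[symmetric]
  proof (intro exI[of _ n0] allI impI conjI)
    fix n t i :: nat
    assume "n0 < n" "real n powr 0.99 < real t" "real t < real n - real n powr (1/2 + 2*\<delta>)"
      and i: "real n powr (1/2 + 2*\<delta>) < (1-\<delta>)^i * real (n - t)"
    then have regime: "asymptotic_regime \<delta> M n t" using n0 by blast
    show "cover_property n t ((1-\<delta>)^i * real (n - t)) (2^i / real n powr M * fact (n - t))"
      by (rule asymptotic_regime.cover_property_iterated[OF regime i])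
    fix \<F> assume "\<F> \<subseteq> Sigma_n n" "s_intersecting t \<F>"
      "2^(i+1) / real n powr M * fact (n - t) \<le> real (card \<F>)"
    then show "\<exists>X. X \<subseteq> {1..n} \<times> {1..n} \<and> card X = t - nat \<lfloor>sqrt (real n)\<rfloor> \<and>
        (10 * real n powr (1/2 - \<delta>)) powr (- ((1-\<delta>)^(i+1) * real (n - t))) * real (card \<F>)
          \<le> real (card (fam_link \<F> X))"
      by (rule asymptotic_regime.dense_link[OF regime i])
  qed
qed

end
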